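(* Let $(A,\cdot)$ be a commutative associative algebra and $(P,Q)$ an admissible pair on it. Define $x\star y=x\cdot Q(y)$ for $x,y\in A$. Then $(A,\star)$ is a Novikov algebra.
   Context: All vector spaces are finite-dimensional over a field $\mathbb F$ of characteristic $0$. An admissible pair on a commutative associative algebra $(A,\cdot)$ is a pair of linear maps $P,Q:A\to A$ with $Q(x\cdot y)=Q(x)\cdot y+x\cdot P(y)$ for all $x,y\in A$. A Novikov algebra is $(A,\star)$ with $(x\star y)\star z-x\star(y\star z)=(y\star x)\star z-y\star(x\star z)$ and $(x\star y)\star z=(x\star z)\star y$ for all $x,y,z\in A$. *)

theory Defs
  imports Complex_Main
begin

text \<open>A commutative associative algebra over a field: the carrier type 'a is a
(not necessarily unital) commutative ring, i.e. the multiplication is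
commutative, associative and biadditive; the scalar multiplication makes
it a vector space and the product is bilinear w.r.t. it.\<close>

definition bilinear_op :: "('f::field \<Rightarrow> 'a::ab_group_add \<Rightarrow> 'a) \<Rightarrow> ('a \<Rightarrow> 'a \<Rightarrow> 'a) \<Rightarrow> bool" where
  "bilinear_op scale m \<longleftrightarrow>
     (\<forall>x y z. m (x + y) z = m x z + m y z) \<and>
     (\<forall>x y z. m x (y + z) = m x y + m x z) \<and>
     (\<forall>c x y. m (scale c x) y = scale c (m x y)) \<and>
     (\<forall>c x y. m x (scale c y) = scale c (m x y))"

definition admissible_pair :: "('a::comm_ring \<Rightarrow> 'a) \<Rightarrow> ('a \<Rightarrow> 'a) \<Rightarrow> bool" where
  "admissible_pair P Q \<longleftrightarrow> (\<forall>x y. Q (x * y) = Q x * y + x * P y)"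

definition novikov_algebra :: "('f::field \<Rightarrow> 'a::ab_group_add \<Rightarrow> 'a) \<Rightarrow> ('a \<Rightarrow> 'a \<Rightarrow> 'a) \<Rightarrow> bool" where
  "novikov_algebra scale star \<longleftrightarrow>
     bilinear_op scale star \<and>
     (\<forall>x y z. star (star x y) z - star x (star y z) = star (star y x) z - star y (star x z)) \<and>
     (\<forall>x y z. star (star x y) z = star (star x z) y)"

end

theory Submission
  imports Defs
begin

text \<open>The admissibility identity turns the associator of \<open>x \<star> y = x Q(y)\<close> into
  \<open>-x y P(Q z)\<close>, which is symmetric in \<open>x\<close> and \<open>y\<close>; right commutativity only uses that
  the product is commutative and associative.\<close>

lemma bilinear_op_compose_right_linear:
  assumes "bilinear_op scale m"
    and "Vector_Spaces.linear scale scale Q"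
  shows "bilinear_op scale (\<lambda>x y. m x (Q y))"
proof -
  interpret Q: Vector_Spaces.linear scale scale Q
    by (fact assms(2))
  show ?thesis
    using assms(1) by (simp add: bilinear_op_def Q.add Q.scale)
qed

lemma mult_right_commute_image:
  fixes x y z :: "'a::ab_semigroup_mult"
  shows "(x * Q y) * Q z = (x * Q z) * Q y"
  by (simp add: ac_simps)

lemma admissible_pair_associator:
  fixes x y z :: "'a::comm_ring"
  assumes "admissible_pair P Q"
  shows "(x * Q y) * Q z - x * Q (y * Q z) = - (x * y * P (Q z))"
  using assms by (simp add: admissible_pair_def algebra_simps)

lemma admissible_pair_left_symmetric:
  fixes x y z :: "'a::comm_ring"
  assumes "admissible_pair P Q"
  shows "(x * Q y) * Q z - x * Q (y * Q z) = (y * Q x) * Q z - y * Q (x * Q z)"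
  unfolding admissible_pair_associator[OF assms] by (simp add: mult.commute)

theorem proposition3p26:
  fixes scale :: "'f::field_char_0 \<Rightarrow> 'a::comm_ring \<Rightarrow> 'a"
    and B :: "'a set"
    and P Q :: "'a \<Rightarrow> 'a"
  assumes "finite_dimensional_vector_space scale B"
    and "bilinear_op scale (*)"
    and "Vector_Spaces.linear scale scale P"
    and "Vector_Spaces.linear scale scale Q"
    and "admissible_pair P Q"
  shows "novikov_algebra scale (\<lambda>x y. x * Q y)"
  unfolding novikov_algebra_def
  using bilinear_op_compose_right_linear[OF assms(2,4)]
    admissible_pair_left_symmetric[OF assms(5)] mult_right_commute_image
  by blast

end
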